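(* Let $d\in\mathbb N\cup\{\infty\}$ and ${\boldsymbol\gamma}\in\mathcal W_d\setminus\mathcal M_d$. Then the set $\Gamma=\{\widetilde{\boldsymbol\gamma}\in\mathcal M_d:\widetilde{\boldsymbol\gamma}\le{\boldsymbol\gamma}\}$, partially ordered by componentwise $\le$, contains a maximal element.
   Context: Write $[d]=\{1,\dots,d\}$ if $d\in\mathbb N$ and $[d]=\mathbb N$ if $d=\infty$. $\mathcal U_d$ is the set of finite subsets of $[d]$; $\mathcal W_d$ is the set of families $(\gamma_u)_{u\in\mathcal U_d}$ of non-negative reals, ordered componentwise. $(\Delta_v{\boldsymbol\gamma})_u=\sum_{w\subseteq v}(-1)^{|w|}\gamma_{u\cup w}$; $\mathcal M_d$ is the set of ${\boldsymbol\gamma}\in\mathcal W_d$ with $(\Delta_v{\boldsymbol\gamma})_u\ge0$ for all $u,v\in\mathcal U_d$ (completely monotone weights). *)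

theory Defs
  imports Main "HOL-Library.Extended_Nat"
begin

definition idx :: "enat \<Rightarrow> nat set" where
  "idx d = {n. 1 \<le> n \<and> enat n \<le> d}"

definition U :: "enat \<Rightarrow> nat set set" where
  "U d = {u. finite u \<and> u \<subseteq> idx d}"

text \<open>W_d: families of non-negative reals indexed by U_d, represented as functions
  on nat set that vanish outside U_d (canonical representative).\<close>
definition W :: "enat \<Rightarrow> (nat set \<Rightarrow> real) set" where
  "W d = {\<gamma>. (\<forall>u\<in>U d. 0 \<le> \<gamma> u) \<and> (\<forall>u. u \<notin> U d \<longrightarrow> \<gamma> u = 0)}"

definition wle :: "enat \<Rightarrow> (nat set \<Rightarrow> real) \<Rightarrow> (nat set \<Rightarrow> real) \<Rightarrow> bool" where
  "wle d \<gamma> \<gamma>' \<longleftrightarrow> (\<forall>u\<in>U d. \<gamma> u \<le> \<gamma>' u)"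

definition Delta :: "nat set \<Rightarrow> (nat set \<Rightarrow> real) \<Rightarrow> nat set \<Rightarrow> real" where
  "Delta v \<gamma> u = (\<Sum>w\<in>Pow v. (-1) ^ card w * \<gamma> (u \<union> w))"

definition M :: "enat \<Rightarrow> (nat set \<Rightarrow> real) set" where
  "M d = {\<gamma>\<in>W d. \<forall>u\<in>U d. \<forall>v\<in>U d. 0 \<le> Delta v \<gamma> u}"

end

theory Submission
  imports Defs
begin

text \<open>By Zorn's lemma it suffices that every chain in \<open>\<Gamma>\<close> has an upper bound in \<open>\<Gamma>\<close>.
  The empty chain is bounded by the zero family. A nonempty chain is bounded by its
  componentwise supremum, which stays below \<open>\<gamma>\<close>, and which is again completely monotone:
  each \<open>(\<Delta>\<^sub>v \<gamma>)\<^sub>u\<close> involves only the finitely many components \<open>u \<union> w\<close>, \<open>w \<subseteq> v\<close>, and since the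
  family is a chain, a single member approximates the supremum on all of them at once.\<close>

lemma wle_antisym_on_W:
  assumes "a \<in> W d" "b \<in> W d" "wle d a b" "wle d b a"
  shows "a = b"
proof
  fix u
  show "a u = b u"
    using assms by (cases "u \<in> U d") (auto simp: W_def wle_def intro: order_antisym)
qed

lemma partial_order_on_wle:
  assumes "A \<subseteq> W d"
  shows "partial_order_on A (relation_of (wle d) A)"
proof (rule partial_order_on_relation_ofI)
  show "wle d a a" for a
    by (simp add: wle_def)
  show "wle d a c" if "wle d a b" "wle d b c" for a b c
    using that unfolding wle_def by (meson order_trans)
  show "a = b" if "a \<in> A" "b \<in> A" "wle d a b" "wle d b a" for a b
    using that assms wle_antisym_on_W by blast
qed

lemma zero_in_M: "(\<lambda>_. 0) \<in> M d"
  unfolding M_def W_def Delta_def by auto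

lemma Un_in_U: "u \<in> U d \<Longrightarrow> v \<in> U d \<Longrightarrow> w \<subseteq> v \<Longrightarrow> u \<union> w \<in> U d"
  unfolding U_def by (auto intro: finite_subset)

lemma abs_Delta_diff_le:
  "\<bar>Delta v a u - Delta v b u\<bar> \<le> (\<Sum>w\<in>Pow v. \<bar>a (u \<union> w) - b (u \<union> w)\<bar>)"
proof -
  have "Delta v a u - Delta v b u = (\<Sum>w\<in>Pow v. (-1) ^ card w * (a (u \<union> w) - b (u \<union> w)))"
    unfolding Delta_def by (simp add: sum_subtractf[symmetric] algebra_simps)
  also have "\<bar>\<dots>\<bar> \<le> (\<Sum>w\<in>Pow v. \<bar>(-1) ^ card w * (a (u \<union> w) - b (u \<union> w))\<bar>)"
    by (rule sum_abs)
  finally show ?thesis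
    by (simp add: abs_mult power_abs)
qed

definition chain_sup :: "enat \<Rightarrow> (nat set \<Rightarrow> real) set \<Rightarrow> nat set \<Rightarrow> real" where
  "chain_sup d C u = (if u \<in> U d then (SUP c\<in>C. c u) else 0)"

lemma bdd_above_components:
  "\<forall>c\<in>C. wle d c g \<Longrightarrow> u \<in> U d \<Longrightarrow> bdd_above ((\<lambda>c. c u) ` C)"
  unfolding bdd_above_def wle_def by auto

lemma chain_sup_upper:
  assumes "\<forall>c\<in>C. wle d c g" "c \<in> C"
  shows "wle d c (chain_sup d C)"
  unfolding wle_def chain_sup_def
  using cSUP_upper[OF assms(2) bdd_above_components[OF assms(1)]] by simp

lemma chain_sup_least:
  "C \<noteq> {} \<Longrightarrow> \<forall>c\<in>C. wle d c g \<Longrightarrow> wle d (chain_sup d C) g"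
  unfolding wle_def chain_sup_def by (auto intro!: cSUP_least)

lemma chain_sup_in_W:
  assumes "C \<noteq> {}" "C \<subseteq> W d" "\<forall>c\<in>C. wle d c g"
  shows "chain_sup d C \<in> W d"
proof -
  obtain c where "c \<in> C" using assms(1) by blast
  then have "0 \<le> c u \<and> c u \<le> chain_sup d C u" if "u \<in> U d" for u
    using assms that chain_sup_upper[OF assms(3)] by (auto simp: W_def wle_def)
  then show ?thesis
    by (fastforce simp: W_def chain_sup_def)
qed

lemma chain_sup_approx:
  assumes ne: "C \<noteq> {}"
    and chain: "\<forall>a\<in>C. \<forall>b\<in>C. wle d a b \<or> wle d b a"
    and bdd: "\<forall>c\<in>C. wle d c g"
    and e: "e > 0"
  shows "finite F \<Longrightarrow> F \<subseteq> U d \<Longrightarrow> \<exists>c\<in>C. \<forall>u\<in>F. chain_sup d C u - e < c u"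
proof (induction F rule: finite_induct)
  case empty
  then show ?case using ne by auto
next
  case (insert x F)
  then obtain c1 where c1: "c1 \<in> C" "\<forall>u\<in>F. chain_sup d C u - e < c1 u" by auto
  have "x \<in> U d" using insert by auto
  then have "chain_sup d C x - e < (SUP c\<in>C. c x)"
    using e by (simp add: chain_sup_def)
  then obtain c2 where c2: "c2 \<in> C" "chain_sup d C x - e < c2 x"
    using less_cSupD[of "(\<lambda>c. c x) ` C"] ne by auto
  from chain c1(1) c2(1) consider "wle d c1 c2" | "wle d c2 c1" by blast
  then show ?case
  proof cases
    case 1
    have "chain_sup d C u - e < c2 u" if "u \<in> F" for u
      using c1(2) that 1 insert.prems unfolding wle_def
      by (meson insert_subset order_less_le_trans subsetD)
    then show ?thesis using c2 by blast
  next
    case 2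
    then have "chain_sup d C x - e < c1 x"
      using c2(2) \<open>x \<in> U d\<close> unfolding wle_def by (meson order_less_le_trans)
    then show ?thesis using c1 by blast
  qed
qed

lemma chain_sup_Delta_nonneg:
  assumes ne: "C \<noteq> {}" and CM: "C \<subseteq> M d"
    and chain: "\<forall>a\<in>C. \<forall>b\<in>C. wle d a b \<or> wle d b a"
    and bdd: "\<forall>c\<in>C. wle d c g"
    and u: "u \<in> U d" and v: "v \<in> U d"
  shows "0 \<le> Delta v (chain_sup d C) u"
proof (rule field_le_epsilon)
  fix e :: real assume "e > 0"
  let ?s = "chain_sup d C" and ?N = "real (card (Pow v))"
  have "finite v" using v by (simp add: U_def)
  then have "?N > 0" by (auto simp: card_gt_0_iff)
  have F: "(\<lambda>w. u \<union> w) ` Pow v \<subseteq> U d" using Un_in_U[OF u v] by auto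
  have "e / ?N > 0" and "finite ((\<lambda>w. u \<union> w) ` Pow v)"
    using \<open>e > 0\<close> \<open>?N > 0\<close> \<open>finite v\<close> by simp_all
  then obtain c where "c \<in> C" and c: "\<forall>x\<in>(\<lambda>w. u \<union> w) ` Pow v. ?s x - e / ?N < c x"
    using chain_sup_approx[OF ne chain bdd _ _ F] by blast
  have close: "\<bar>c (u \<union> w) - ?s (u \<union> w)\<bar> < e / ?N" if "w \<in> Pow v" for w
  proof -
    have "u \<union> w \<in> U d" using F that by blast
    then have "c (u \<union> w) \<le> ?s (u \<union> w)"
      using chain_sup_upper[OF bdd \<open>c \<in> C\<close>] unfolding wle_def by blast
    moreover have "?s (u \<union> w) - e / ?N < c (u \<union> w)" using c that by blast
    ultimately show ?thesis by linarith
  qed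
  have "0 \<le> Delta v c u"
    using \<open>c \<in> C\<close> CM u v by (auto simp: M_def)
  also have "\<dots> \<le> Delta v ?s u + (\<Sum>w\<in>Pow v. \<bar>c (u \<union> w) - ?s (u \<union> w)\<bar>)"
    using abs_Delta_diff_le[of v c u ?s] by linarith
  also have "\<dots> \<le> Delta v ?s u + (\<Sum>w\<in>Pow v. e / ?N)"
    using close by (intro add_left_mono sum_mono) (auto intro: less_imp_le)
  also have "\<dots> = Delta v ?s u + e"
    using \<open>?N > 0\<close> by simp
  finally show "0 \<le> Delta v ?s u + e" .
qed

lemma chain_sup_in_M:
  assumes "C \<noteq> {}" "C \<subseteq> M d"
    and "\<forall>a\<in>C. \<forall>b\<in>C. wle d a b \<or> wle d b a"
    and "\<forall>c\<in>C. wle d c g"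
  shows "chain_sup d C \<in> M d"
  using chain_sup_in_W[of C d g] chain_sup_Delta_nonneg[OF assms] assms(1,2,4)
  by (auto simp: M_def)

lemma M_below_has_maximal:
  assumes "\<gamma> \<in> W d"
  shows "\<exists>\<gamma>m \<in> {\<gamma>'\<in>M d. wle d \<gamma>' \<gamma>}.
           \<forall>\<gamma>'' \<in> {\<gamma>'\<in>M d. wle d \<gamma>' \<gamma>}. wle d \<gamma>m \<gamma>'' \<longrightarrow> \<gamma>'' = \<gamma>m"
proof (rule predicate_Zorn)
  let ?\<Gamma> = "{\<gamma>'\<in>M d. wle d \<gamma>' \<gamma>}"
  show "partial_order_on ?\<Gamma> (relation_of (wle d) ?\<Gamma>)"
    by (rule partial_order_on_wle) (auto simp: M_def)
  fix C assume C: "C \<in> Chains (relation_of (wle d) ?\<Gamma>)"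
  then have "C \<subseteq> ?\<Gamma>" by (rule Chains_relation_of)
  have chain: "\<forall>a\<in>C. \<forall>b\<in>C. wle d a b \<or> wle d b a"
    using C unfolding Chains_def relation_of_def by auto
  show "\<exists>s\<in>?\<Gamma>. \<forall>c\<in>C. wle d c s"
  proof (cases "C = {}")
    case True
    have "(\<lambda>_. 0) \<in> ?\<Gamma>" using zero_in_M assms by (auto simp: wle_def W_def)
    then show ?thesis using True by blast
  next
    case False
    have "C \<subseteq> M d" and bdd: "\<forall>c\<in>C. wle d c \<gamma>" using \<open>C \<subseteq> ?\<Gamma>\<close> by auto
    then have "chain_sup d C \<in> ?\<Gamma>"
      using chain_sup_in_M[OF False _ chain] chain_sup_least[OF False] by blast
    with chain_sup_upper[OF bdd] show ?thesis by blast
  qed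
qed

theorem mainTheorem18:
  fixes d :: enat and \<gamma> :: "nat set \<Rightarrow> real"
  assumes "d \<ge> 1"
    and "\<gamma> \<in> W d - M d"
  shows "\<exists>\<gamma>m \<in> {\<gamma>'\<in>M d. wle d \<gamma>' \<gamma>}.
           \<forall>\<gamma>'' \<in> {\<gamma>'\<in>M d. wle d \<gamma>' \<gamma>}. wle d \<gamma>m \<gamma>'' \<longrightarrow> \<gamma>'' = \<gamma>m"
  using assms(2) by (intro M_below_has_maximal) simp

end
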